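(* Let $\Sigma$ be an $n$-simplex in an $n$-dimensional real normed linear space $X$. Then $\mathsf{relint}(\Sigma)$ is the interior of $\Sigma$.
   Context: The setting is Bishop's constructive mathematics (intuitionistic logic). Vectors $v_1,\ldots,v_n$ are linearly independent if $\|\sum_i\lambda_iv_i\|>0$ whenever $\sum_i|\lambda_i|>0$; points $a_1,\ldots,a_{n+1}$ are affinely independent if $a_k-a_{n+1}$ ($1\le k\le n$) are linearly independent; an $n$-simplex is the convex hull of $n+1$ affinely independent points. $\mathsf{aff}(S)$ is the set of affine combinations of elements of $S$, $B_X(x,r)$ the open ball, and $\mathsf{relint}(S)=\{x\in S:\exists r>0\,(B_X(x,r)\cap\mathsf{aff}(S)\subset S)\}$. The interior of $S$ is $\{x\in S:\exists r>0\,(B_X(x,r)\subset S)\}$. *)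

theory Defs
  imports "HOL-Analysis.Analysis"
begin

definition aff_indep_pts :: "nat \<Rightarrow> (nat \<Rightarrow> 'a::real_vector) \<Rightarrow> bool" where
  "aff_indep_pts n a \<longleftrightarrow>
     inj_on (\<lambda>k. a k - a n) {..<n} \<and> independent ((\<lambda>k. a k - a n) ` {..<n})"

definition is_simplex :: "nat \<Rightarrow> 'a::real_vector set \<Rightarrow> bool" where
  "is_simplex n S \<longleftrightarrow> (\<exists>a. aff_indep_pts n a \<and> S = convex hull (a ` {..n}))"

definition relint :: "'a::real_normed_vector set \<Rightarrow> 'a set" where
  "relint S = {x \<in> S. \<exists>r>0. ball x r \<inter> affine hull S \<subseteq> S}"

definition has_dimension :: "'a::real_vector itself \<Rightarrow> nat \<Rightarrow> bool" where
  "has_dimension TYPE('a) n \<longleftrightarrow>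
     (\<exists>B::'a set. finite B \<and> card B = n \<and> independent B \<and> span B = UNIV)"

end

theory Submission
  imports Defs
begin

text \<open>The n edge vectors of an n-simplex issuing from its last vertex are independent, so in an
  n-dimensional space they form a basis. The simplex therefore has the whole space as affine hull,
  and the relative interior, whose balls are cut down to the affine hull, is just the interior.\<close>

lemma has_dimension_independent_card_span:
  fixes S :: "'a::real_vector set"
  assumes "has_dimension TYPE('a) n" and "independent S" and "card S = n"
  shows "span S = UNIV"
proof (rule ccontr)
  obtain B :: "'a set" where B: "finite B" "card B = n" "span B = UNIV"
    using assms(1) unfolding has_dimension_def by blast
  assume "span S \<noteq> UNIV"
  then obtain x where x: "x \<notin> span S" by blast
  have "independent (insert x S)"
    using assms(2) x by (simp add: independent_insert)
  then have "finite (insert x S) \<and> card (insert x S) \<le> card B"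
    by (rule independent_span_bound[OF B(1)]) (simp add: B(3))
  moreover have "x \<notin> S"
    using x span_base by blast
  ultimately show False
    using assms(3) B(2) by auto
qed

lemma affine_hull_vertices:
  fixes a :: "nat \<Rightarrow> 'a::real_vector"
  shows "affine hull (a ` {..n}) = (\<lambda>x. a n + x) ` span ((\<lambda>k. a k - a n) ` {..<n})"
proof -
  have "{..n} = insert n {..<n}"
    by auto
  then have "a ` {..n} = insert (a n) (a ` {..<n})"
    by simp
  moreover have "(\<lambda>x. - a n + x) ` a ` {..<n} = (\<lambda>k. a k - a n) ` {..<n}"
    by (auto simp: image_image)
  ultimately show ?thesis
    by (simp only: affine_hull_insert_span_gen)
qed

lemma affine_hull_simplex_full_dimension:
  fixes \<Sigma> :: "'a::real_vector set"
  assumes "has_dimension TYPE('a) n" and "is_simplex n \<Sigma>"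
  shows "affine hull \<Sigma> = UNIV"
proof -
  obtain a where indep: "aff_indep_pts n a" and \<Sigma>: "\<Sigma> = convex hull (a ` {..n})"
    using assms(2) unfolding is_simplex_def by blast
  let ?E = "(\<lambda>k. a k - a n) ` {..<n}"
  have inj: "inj_on (\<lambda>k. a k - a n) {..<n}" and "independent ?E"
    using indep unfolding aff_indep_pts_def by auto
  moreover have "card ?E = n"
    using card_image[OF inj] by simp
  ultimately have "span ?E = UNIV"
    using has_dimension_independent_card_span[OF assms(1)] by blast
  then have "affine hull (a ` {..n}) = range (\<lambda>x. a n + x)"
    by (simp add: affine_hull_vertices)
  also have "\<dots> = UNIV"
    by (rule surjI[of _ "\<lambda>y. y - a n"]) simp
  finally show ?thesis
    by (simp add: \<Sigma>)
qed

lemma relint_eq_interior_if_affine_hull_UNIV: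
  fixes S :: "'a::real_normed_vector set"
  assumes "affine hull S = UNIV"
  shows "relint S = interior S"
  unfolding relint_def assms using interior_subset by (auto simp: mem_interior)

theorem proposition21:
  fixes \<Sigma> :: "'a::real_normed_vector set" and n :: nat
  assumes "has_dimension TYPE('a) n"
    and "is_simplex n \<Sigma>"
  shows "relint \<Sigma> = interior \<Sigma>"
  by (rule relint_eq_interior_if_affine_hull_UNIV[OF affine_hull_simplex_full_dimension[OF assms]])

end
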